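(* Let $v>0$, $d>0$, $s\ge d/2$ and $\theta\in[0,\pi/3)$. Let $\Lambda_\theta=\{a\,d\,(\cos\theta,\sin\theta)+b\,d\,(\cos(\theta+\pi/3),\sin(\theta+\pi/3)) : a,b\in\mathbb{Z}\}$. Robots start at time $0$ at the positions $(s,0)+q$ for all $q\in\Lambda_\theta$ with $q_x\ge0$ (where $q=(q_x,q_y)$), and move with constant velocity $(-v,0)$; the robot starting at $(s,0)+q$ has reached the target by time $T$ iff $\|(s,0)+q-(vt,0)\|\le s$ for some $t\in[0,T]$. Let $N(T)$ be the number of robots that have reached the target by time $T$ and $f_h(T,\theta)=\frac{N(T)-1}{T}$. Then $\lim_{T\to\infty}f_h(T,\theta)$ exists and $$\lim_{T\to\infty}f_h(T,\theta)\in\left(\frac{4vs}{\sqrt3 d^2}-\frac{2v\cos(\theta-\pi/6)}{\sqrt3 d},\ \frac{4vs}{\sqrt3 d^2}+\frac{2v\cos(\theta-\pi/6)}{\sqrt3 d}\right].$$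
   Context: The target is the closed disc of radius $s$ centred at the origin. The robots form a hexagonal packing (triangular lattice of spacing $d$) whose hexagonal packing angle is $\theta$: the angle between the $x$-axis and the segment from any robot to one of its neighbours at $(x+d\cos\theta,y+d\sin\theta)$; by periodicity angles are taken in $[0,\pi/3)$. The robot with $q=0$ is the first to reach the target, at time $0$. $f_h(T,\theta)$ is the throughput at time $T$. *)

theory Defs
  imports "HOL-Analysis.Analysis"
begin

definition hex_lattice :: "real \<Rightarrow> real \<Rightarrow> (real \<times> real) set" where
  "hex_lattice d \<theta> =
     {(of_int a * d * cos \<theta> + of_int b * d * cos (\<theta> + pi/3),
       of_int a * d * sin \<theta> + of_int b * d * sin (\<theta> + pi/3)) | a b :: int. True}"

definition reached :: "real \<Rightarrow> real \<Rightarrow> real \<Rightarrow> real \<times> real \<Rightarrow> bool" where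
  "reached v s T q \<longleftrightarrow>
     (\<exists>t\<in>{0..T}. norm ((s + fst q - v * t, snd q) :: real \<times> real) \<le> s)"

definition N_reached :: "real \<Rightarrow> real \<Rightarrow> real \<Rightarrow> real \<Rightarrow> real \<Rightarrow> nat" where
  "N_reached v d s \<theta> T = card {q \<in> hex_lattice d \<theta>. fst q \<ge> 0 \<and> reached v s T q}"

definition f_h :: "real \<Rightarrow> real \<Rightarrow> real \<Rightarrow> real \<Rightarrow> real \<Rightarrow> real" where
  "f_h v d s T \<theta> = (real (N_reached v d s \<theta> T) - 1) / T"

end

theory Submission
  imports Defs "HOL-Real_Asymp.Real_Asymp"
begin

text \<open>
  Up to boundary effects, the robots that have reached the target by time \<open>T\<close> are the lattice
  points in the rectangle \<open>0 \<le> x \<le> vT\<close>, \<open>|y| \<le> s\<close>. Group the lattice into rows parallel to the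
  second basis vector \<open>w\<close>: row \<open>a\<close> meets the strip \<open>|y| \<le> s\<close> in \<open>2s/w\<^sub>y + 1\<close> points minus two
  fractional parts of the form \<open>frac (s/w\<^sub>y \<plusminus> a u\<^sub>y/w\<^sub>y)\<close>, and about \<open>v w\<^sub>y T / (\<surd>3 d\<^sup>2/2)\<close> rows
  meet the rectangle. Cesaro means of \<open>frac (\<beta> + a\<alpha>)\<close> converge (to \<open>1/2\<close> by Kronecker's theorem
  if \<open>\<alpha>\<close> is irrational, to the average over a period if \<open>\<alpha>\<close> is rational), so the mean row count
  \<open>\<mu>\<close> exists and \<open>f\<^sub>h\<close> tends to the number of rows per unit time times \<open>\<mu>\<close>. Every row count
  is an integer in \<open>(2s/w\<^sub>y - 1, 2s/w\<^sub>y + 1]\<close>, so \<open>\<lfloor>2s/w\<^sub>y\<rfloor> \<le> \<mu> \<le> 2s/w\<^sub>y + 1\<close>, which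
  gives the interval.
\<close>

section \<open>Cesaro means of fractional parts\<close>

lemma frac_add_frac_left: "frac (frac x + y) = frac (x + y)"
proof -
  have "x + y = (frac x + y) + of_int \<lfloor>x\<rfloor>" by (simp add: frac_def)
  then show ?thesis by (metis frac_add_of_int_right)
qed

lemma frac_eq_if_less_2:
  fixes y :: real
  assumes "0 \<le> y" "y < 2"
  shows "frac y = y - (if 1 \<le> y then 1 else 0)"
proof -
  have "\<lfloor>y\<rfloor> = (if 1 \<le> y then 1 else 0)"
    using assms by (simp add: floor_eq_iff)
  then show ?thesis by (simp add: frac_def)
qed

lemma card_lessThan_ge_bounds:
  fixes R :: real
  assumes "0 \<le> R"
  shows "real M - R - 1 \<le> real (card {j. j < M \<and> R \<le> real j})"
    and "real (card {j. j < M \<and> R \<le> real j}) \<le> max 0 (real M - R)"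
proof -
  have "{j. j < M \<and> R \<le> real j} = {nat \<lceil>R\<rceil>..<M}"
    by (auto simp: ceiling_le_iff nat_le_iff le_nat_iff)
  then have "card {j. j < M \<and> R \<le> real j} = M - nat \<lceil>R\<rceil>" by simp
  moreover have "real (M - n) = max 0 (real M - real n)" for n
    by (cases "n \<le> M") auto
  moreover have "R \<le> real (nat \<lceil>R\<rceil>)" "real (nat \<lceil>R\<rceil>) < R + 1"
    using assms ceiling_correct[of R] by linarith+
  ultimately show "real M - R - 1 \<le> real (card {j. j < M \<and> R \<le> real j})"
    and "real (card {j. j < M \<and> R \<le> real j}) \<le> max 0 (real M - R)"
    by linarith+
qed

lemma sum_frac_progression_eq:
  fixes c \<delta> :: real
  assumes c: "0 \<le> c" "c < 1" and \<delta>: "0 < \<delta>" and M\<delta>: "real M * \<delta> \<le> 1"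
  shows "(\<Sum>j<M. frac (c + real j * \<delta>))
    = c * real M + (real M * \<delta>) * (real M - 1) / 2 - real (card {j. j < M \<and> (1 - c) / \<delta> \<le> real j})"
proof -
  have "frac (c + real j * \<delta>) = c + real j * \<delta> - (if (1 - c) / \<delta> \<le> real j then 1 else 0)"
    if "j < M" for j
  proof -
    have "real j * \<delta> \<le> (real M - 1) * \<delta>"
      using that \<delta> by (intro mult_right_mono) auto
    then have "c + real j * \<delta> < 2" using M\<delta> c \<delta> by (simp add: algebra_simps)
    moreover have "(1 - c) / \<delta> \<le> real j \<longleftrightarrow> 1 \<le> c + real j * \<delta>"
      using \<delta> by (simp add: field_simps)
    ultimately show ?thesis using frac_eq_if_less_2[of "c + real j * \<delta>"] \<delta> c by simp
  qed
  then have "(\<Sum>j<M. frac (c + real j * \<delta>))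
      = (\<Sum>j<M. c + real j * \<delta> - (if (1 - c) / \<delta> \<le> real j then 1 else 0))"
    by (intro sum.cong) auto
  also have "\<dots> = real M * c + \<delta> * (\<Sum>j<M. real j) - real (card {j. j < M \<and> (1 - c) / \<delta> \<le> real j})"
    by (simp add: sum.distrib sum_subtractf sum_distrib_left mult.commute sum.If_cases Int_def)
  also have "(\<Sum>j<M. real j) = real M * (real M - 1) / 2"
    by (induction M) (simp_all add: field_simps)
  finally show ?thesis by (simp add: algebra_simps)
qed

lemma sum_frac_progression_near_half:
  fixes \<delta> x :: real
  assumes \<delta>: "0 < \<delta>" "\<delta> \<le> 1"
  defines "M \<equiv> nat \<lfloor>1 / \<delta>\<rfloor>"
  shows "\<bar>(\<Sum>j<M. frac (x + real j * \<delta>)) - real M / 2\<bar> \<le> 2"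
proof -
  define c where "c = frac x"
  define R where "R = (1 - c) / \<delta>"
  define K where "K = card {j. j < M \<and> R \<le> real j}"
  define P where "P = (real M * \<delta>) * (real M - 1)"
  have c: "0 \<le> c" "c < 1" by (auto simp: c_def frac_lt_1)
  have M: "real M \<le> 1 / \<delta>" "1 / \<delta> < real M + 1"
    using \<delta> by (simp_all add: M_def)
  then have M\<delta>: "real M * \<delta> \<le> 1" "1 - \<delta> < real M * \<delta>"
    using \<delta> by (simp_all add: field_simps)
  have "1 \<le> 1 / \<delta>" using \<delta> by simp
  then have "0 < real M" using M by linarith
  then have "1 \<le> real M" by simp
  have "(\<Sum>j<M. frac (x + real j * \<delta>)) = (\<Sum>j<M. frac (c + real j * \<delta>))"
    by (simp add: c_def frac_add_frac_left)
  also have "\<dots> = c * real M - real K + P / 2"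
    using sum_frac_progression_eq[OF c \<delta>(1) M\<delta>(1)] by (simp add: K_def P_def R_def)
  finally have sum: "(\<Sum>j<M. frac (x + real j * \<delta>)) = c * real M - real K + P / 2" .
  have "(1 - c) * real M \<le> (1 - c) * (1 / \<delta>)" "(1 - c) * (1 / \<delta>) \<le> (1 - c) * (real M + 1)"
    using M c by (intro mult_left_mono; simp)+
  then have R: "(1 - c) * real M \<le> R" "R \<le> (1 - c) * (real M + 1)" "0 \<le> R"
    using c \<delta> by (simp_all add: R_def)
  have K: "real M - R - 1 \<le> real K" "real K \<le> max 0 (real M - R)"
    using card_lessThan_ge_bounds[OF R(3)] unfolding K_def by auto
  have "max 0 (real M - R) \<le> c * real M" using R(1) c by (simp add: algebra_simps)
  moreover have "real M - R - 1 \<ge> c * real M - 2" using R(2) c by (simp add: algebra_simps)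
  ultimately have "c * real M - 2 \<le> real K" "real K \<le> c * real M" using K by linarith+
  moreover have "real M - 2 \<le> P"
  proof -
    have "(1 - \<delta>) * (real M - 1) \<le> (real M * \<delta>) * (real M - 1)"
      using M\<delta> \<open>1 \<le> real M\<close> by (intro mult_right_mono) auto
    moreover have "\<delta> * (real M - 1) \<le> 1" using M\<delta> \<delta> by (simp add: algebra_simps)
    ultimately show ?thesis by (simp add: P_def algebra_simps)
  qed
  moreover have "P \<le> real M - 1"
    using mult_right_mono[of "real M * \<delta>" 1 "real M - 1"] M\<delta> \<open>1 \<le> real M\<close>
    by (simp add: P_def)
  ultimately show ?thesis unfolding sum abs_le_iff by (intro conjI) linarith+
qed

lemma sum_lessThan_deviation_le:
  fixes f :: "nat \<Rightarrow> real"
  assumes "\<And>a. a < m \<Longrightarrow> \<bar>f a - c\<bar> \<le> e"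
  shows "\<bar>(\<Sum>a<m. f a) - real m * c\<bar> \<le> real m * e"
proof -
  have "\<bar>(\<Sum>a<m. f a) - real m * c\<bar> = \<bar>\<Sum>a<m. f a - c\<bar>" by (simp add: sum_subtractf)
  also have "\<dots> \<le> (\<Sum>a<m. \<bar>f a - c\<bar>)" by (rule sum_abs)
  also have "\<dots> \<le> (\<Sum>a<m. e)" using assms by (intro sum_mono) auto
  finally show ?thesis by simp
qed

definition frac_sum :: "real \<Rightarrow> real \<Rightarrow> nat \<Rightarrow> real" where
  "frac_sum \<alpha> \<beta> m = (\<Sum>a<m. frac (\<beta> + real a * \<alpha>))"

lemma frac_sum_add_of_int: "frac_sum \<alpha> (\<beta> + of_int z) m = frac_sum \<alpha> \<beta> m"
  unfolding frac_sum_def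
  by (intro sum.cong refl) (metis add.assoc add.commute frac_add_of_int_right)

lemma frac_sum_shift_le: "\<bar>frac_sum \<alpha> (\<beta> + real k * \<alpha>) m - frac_sum \<alpha> \<beta> m\<bar> \<le> real k"
proof (induction k)
  case (Suc k)
  define \<gamma> where "\<gamma> = \<beta> + real k * \<alpha>"
  have "frac_sum \<alpha> (\<gamma> + \<alpha>) m - frac_sum \<alpha> \<gamma> m
      = (\<Sum>a<m. frac (\<gamma> + real (Suc a) * \<alpha>) - frac (\<gamma> + real a * \<alpha>))"
    unfolding frac_sum_def by (simp add: sum_subtractf algebra_simps)
  also have "\<dots> = frac (\<gamma> + real m * \<alpha>) - frac \<gamma>"
    using sum_lessThan_telescope[of "\<lambda>a. frac (\<gamma> + real a * \<alpha>)" m] by simp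
  finally have "\<bar>frac_sum \<alpha> (\<gamma> + \<alpha>) m - frac_sum \<alpha> \<gamma> m\<bar> \<le> 1"
    using frac_lt_1[of \<gamma>] frac_lt_1[of "\<gamma> + real m * \<alpha>"]
      frac_ge_0[of \<gamma>] frac_ge_0[of "\<gamma> + real m * \<alpha>"] by linarith
  then show ?case using Suc by (simp add: \<gamma>_def algebra_simps)
qed simp

text \<open>
  With \<open>\<delta> = frac (q\<alpha>)\<close>, shifting \<open>\<beta>\<close> by \<open>j\<delta>\<close> changes the sum by at most \<open>jq\<close>, while averaging
  the shifts over \<open>j < M \<approx> 1/\<delta>\<close> samples each \<open>frac\<close> along a progression that covers
  \<open>[0, 1)\<close> evenly.
\<close>
lemma frac_sum_mean_deviation:
  assumes m: "0 < m" and q: "0 < q" and \<delta>: "0 < frac (real q * \<alpha>)"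
  defines "M \<equiv> nat \<lfloor>1 / frac (real q * \<alpha>)\<rfloor>"
  shows "\<bar>frac_sum \<alpha> \<beta> m / real m - 1/2\<bar> \<le> 2 / real M + real M * real q / real m"
proof -
  define \<delta> where "\<delta> = frac (real q * \<alpha>)"
  define S where "S = (\<Sum>j<M. frac_sum \<alpha> (\<beta> + real j * \<delta>) m)"
  have \<delta>1: "\<delta> \<le> 1" using frac_lt_1[of "real q * \<alpha>"] by (simp add: \<delta>_def)
  have "1 \<le> 1 / \<delta>" using \<delta> \<delta>1 by (simp add: \<delta>_def)
  then have M: "0 < real M" by (simp add: M_def \<delta>_def[symmetric])
  have "S = (\<Sum>a<m. \<Sum>j<M. frac ((\<beta> + real a * \<alpha>) + real j * \<delta>))"
    unfolding S_def frac_sum_def by (subst sum.swap) (simp add: ac_simps)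
  also have "\<bar>\<dots> - real m * (real M / 2)\<bar> \<le> real m * 2"
    using sum_frac_progression_near_half \<delta> \<delta>1
    by (intro sum_lessThan_deviation_le) (simp add: M_def \<delta>_def)
  finally have blocks: "\<bar>S - real m * (real M / 2)\<bar> \<le> real m * 2" .
  have shift_eq: "frac_sum \<alpha> (\<beta> + real j * \<delta>) m = frac_sum \<alpha> (\<beta> + real (j * q) * \<alpha>) m"
    for j
  proof -
    have "\<beta> + real j * \<delta> = (\<beta> + real (j * q) * \<alpha>) + of_int (- (int j * \<lfloor>real q * \<alpha>\<rfloor>))"
      by (simp add: \<delta>_def frac_def algebra_simps)
    then show ?thesis by (simp only: frac_sum_add_of_int)
  qed
  have "\<bar>frac_sum \<alpha> (\<beta> + real j * \<delta>) m - frac_sum \<alpha> \<beta> m\<bar> \<le> real M * real q"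
    if "j < M" for j
  proof -
    have "real j * real q \<le> real M * real q" using that by (intro mult_right_mono) auto
    then show ?thesis using frac_sum_shift_le[of \<alpha> \<beta> "j * q" m] by (simp add: shift_eq)
  qed
  then have shifts: "\<bar>S - real M * frac_sum \<alpha> \<beta> m\<bar> \<le> real M * (real M * real q)"
    unfolding S_def by (rule sum_lessThan_deviation_le)
  define F where "F = frac_sum \<alpha> \<beta> m"
  have "\<bar>real M * F - real m * real M / 2\<bar> \<le> 2 * real m + real M * (real M * real q)"
    using blocks shifts unfolding F_def by linarith
  moreover have "F / real m - 1/2 = (real M * F - real m * real M / 2) / (real M * real m)"
    using M m by (simp add: field_simps)
  ultimately have "\<bar>F / real m - 1/2\<bar> \<le> (2 * real m + real M * (real M * real q)) / (real M * real m)"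
    using M m by (simp add: divide_right_mono)
  also have "\<dots> = 2 / real M + real M * real q / real m"
    using M m by (simp add: add_divide_distrib)
  finally show ?thesis unfolding F_def .
qed

lemma frac_sum_mean_irrational:
  assumes "\<alpha> \<notin> \<rat>"
  shows "(\<lambda>m. frac_sum \<alpha> \<beta> m / real m) \<longlonglongrightarrow> 1/2"
proof (rule tendstoI)
  fix \<epsilon> :: real
  assume \<epsilon>: "0 < \<epsilon>"
  define \<epsilon>' where "\<epsilon>' = min (\<epsilon> / 8) (1 / 2)"
  have \<epsilon>': "0 < \<epsilon>'" "\<epsilon>' \<le> \<epsilon> / 8" "\<epsilon>' \<le> 1 / 2" using \<epsilon> by (auto simp: \<epsilon>'_def)
  obtain q :: nat where q: "0 < q" "\<bar>frac (real q * \<alpha>) - \<epsilon>' / 2\<bar> < \<epsilon>' / 2"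
    using Kronecker_approx_1_explicit[OF assms, of "\<epsilon>' / 2" "\<epsilon>' / 2"] \<epsilon>' by auto
  define \<delta> where "\<delta> = frac (real q * \<alpha>)"
  define M where "M = nat \<lfloor>1 / \<delta>\<rfloor>"
  have \<delta>: "0 < \<delta>" "\<delta> < \<epsilon>'" using q(2) unfolding \<delta>_def abs_less_iff by linarith+
  have "8 / \<epsilon> < 1 / \<delta>" "2 \<le> 1 / \<delta>" using \<delta> \<epsilon>' \<epsilon> by (simp_all add: field_simps)
  moreover have "1 / \<delta> < real M + 1" using \<delta> by (simp add: M_def)
  ultimately have "4 / \<epsilon> < real M" by (simp add: field_simps)
  moreover have "0 < 4 / \<epsilon>" using \<epsilon> by simp
  ultimately have "0 < real M" "4 < \<epsilon> * real M" using \<epsilon> by (linarith, simp add: field_simps)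
  then have small: "2 / real M < \<epsilon> / 2" by (simp add: field_simps)
  have dev: "\<bar>frac_sum \<alpha> \<beta> m / real m - 1/2\<bar> \<le> 2 / real M + real M * real q / real m"
    if "0 < m" for m
    using frac_sum_mean_deviation[OF that q(1)] \<delta>(1) by (simp add: M_def \<delta>_def)
  have "\<forall>\<^sub>F m in sequentially. real M * real q / real m < \<epsilon> / 2"
    using \<epsilon> by real_asymp
  moreover have "\<forall>\<^sub>F m in sequentially. 0 < m" by (rule eventually_gt_at_top)
  ultimately show "\<forall>\<^sub>F m in sequentially. dist (frac_sum \<alpha> \<beta> m / real m) (1/2) < \<epsilon>"
  proof eventually_elim
    case (elim m)
    then show ?case using dev[of m] small unfolding dist_real_def by linarith
  qed
qed

lemma sum_lessThan_add_period:
  fixes u :: "nat \<Rightarrow> real"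
  assumes "\<And>a. u (a + q) = u a"
  shows "(\<Sum>a<n + q. u a) = (\<Sum>a<n. u a) + (\<Sum>a<q. u a)"
  by (induction n) (simp_all add: assms)

lemma sum_lessThan_periodic:
  fixes u :: "nat \<Rightarrow> real"
  assumes "\<And>a. u (a + q) = u a"
  shows "(\<Sum>a<r + k * q. u a) = (\<Sum>a<r. u a) + real k * (\<Sum>a<q. u a)"
proof (induction k)
  case (Suc k)
  have "r + Suc k * q = (r + k * q) + q" by simp
  then show ?case using Suc sum_lessThan_add_period[where u = u and q = q, OF assms, of "r + k * q"]
    by (simp add: algebra_simps)
qed simp

lemma periodic_mean_tendsto:
  fixes u :: "nat \<Rightarrow> real"
  assumes per: "\<And>a. u (a + q) = u a" and q: "0 < q" and bnd: "\<And>a. \<bar>u a\<bar> \<le> B"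
  shows "(\<lambda>m. (\<Sum>a<m. u a) / real m) \<longlonglongrightarrow> (\<Sum>a<q. u a) / real q"
proof -
  define \<mu> where "\<mu> = (\<Sum>a<q. u a) / real q"
  have partial: "\<bar>(\<Sum>a<r. u a) - real r * c\<bar> \<le> real r * (B + \<bar>c\<bar>)" for r c
    using bnd abs_triangle_ineq4 by (intro sum_lessThan_deviation_le) (smt (verit))
  have "\<bar>\<mu>\<bar> \<le> B"
    using partial[of q 0] q by (simp add: \<mu>_def divide_le_eq mult.commute)
  have dev: "\<bar>(\<Sum>a<m. u a) - real m * \<mu>\<bar> \<le> real q * (2 * B)" for m
  proof -
    define r k where "r = m mod q" and "k = m div q"
    have m: "m = r + k * q" by (simp add: r_def k_def)
    have "r < q" using q by (simp add: r_def)
    have "(\<Sum>a<m. u a) - real m * \<mu> = (\<Sum>a<r. u a) - real r * \<mu>"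
      unfolding m sum_lessThan_periodic[where u = u and q = q, OF per] using q by (simp add: \<mu>_def algebra_simps)
    also have "\<bar>\<dots>\<bar> \<le> real r * (B + \<bar>\<mu>\<bar>)" by (rule partial)
    also have "\<dots> \<le> real q * (2 * B)"
      using \<open>\<bar>\<mu>\<bar> \<le> B\<close> \<open>r < q\<close> bnd[of 0] by (intro mult_mono) auto
    finally show ?thesis .
  qed
  have "(\<lambda>m. real q * (2 * B) / real m) \<longlonglongrightarrow> 0" by real_asymp
  then have "(\<lambda>m. (\<Sum>a<m. u a) / real m - \<mu>) \<longlonglongrightarrow> 0"
  proof (rule Lim_null_comparison[rotated])
    show "\<forall>\<^sub>F m in sequentially. norm ((\<Sum>a<m. u a) / real m - \<mu>) \<le> real q * (2 * B) / real m"
      using eventually_gt_at_top[of "0::nat"]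
    proof eventually_elim
      case (elim m)
      have "(\<Sum>a<m. u a) / real m - \<mu> = ((\<Sum>a<m. u a) - real m * \<mu>) / real m"
        using elim by (simp add: field_simps)
      then show ?case using dev[of m] elim by (simp add: divide_right_mono)
    qed
  qed
  then show ?thesis unfolding \<mu>_def by (simp add: LIM_zero_iff)
qed

lemma frac_sum_mean_rational:
  assumes "\<alpha> \<in> \<rat>"
  shows "convergent (\<lambda>m. frac_sum \<alpha> \<beta> m / real m)"
proof -
  obtain p q where q: "0 < q" and \<alpha>: "\<alpha> = of_int p / of_int q"
    using Rats_cases'[OF assms] by metis
  have "frac (\<beta> + real (a + nat q) * \<alpha>) = frac (\<beta> + real a * \<alpha>)" for a
  proof -
    have "\<beta> + real (a + nat q) * \<alpha> = (\<beta> + real a * \<alpha>) + of_int p"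
      using q by (simp add: \<alpha> field_simps)
    then show ?thesis by (simp only: frac_add_of_int_right)
  qed
  then have "(\<lambda>m. (\<Sum>a<m. frac (\<beta> + real a * \<alpha>)) / real m)
      \<longlonglongrightarrow> (\<Sum>a<nat q. frac (\<beta> + real a * \<alpha>)) / real (nat q)"
    using q frac_lt_1 by (intro periodic_mean_tendsto[where B = 1]) (auto intro: less_imp_le)
  then show ?thesis unfolding frac_sum_def convergent_def by blast
qed

lemma frac_sum_mean_convergent: "convergent (\<lambda>m. frac_sum \<alpha> \<beta> m / real m)"
  using frac_sum_mean_rational frac_sum_mean_irrational convergent_def by blast

section \<open>Lattice rows crossing a strip\<close>

text \<open>
  The lattice points \<open>a u + b w\<close> with fixed \<open>a\<close> form a row; with \<open>u = u\<^sub>y\<close> and \<open>w = w\<^sub>y\<close> the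
  vertical components of the basis, \<open>strip_row\<close> lists the points of row \<open>a\<close> in the strip \<open>|y| \<le> s\<close>.
\<close>
definition strip_row :: "real \<Rightarrow> real \<Rightarrow> real \<Rightarrow> int \<Rightarrow> int set" where
  "strip_row u w s a = {b. \<bar>of_int a * u + of_int b * w\<bar> \<le> s}"

lemma strip_row_eq_interval:
  assumes "0 < w"
  shows "strip_row u w s a = {\<lceil>(- s - of_int a * u) / w\<rceil> .. \<lfloor>(s - of_int a * u) / w\<rfloor>}"
  using assms by (auto simp: strip_row_def ceiling_le_iff le_floor_iff abs_le_iff
      pos_divide_le_eq pos_le_divide_eq algebra_simps)

lemma finite_strip_row: "0 < w \<Longrightarrow> finite (strip_row u w s a)"
  by (simp add: strip_row_eq_interval)

lemma card_strip_row:
  assumes w: "0 < w" and s: "0 < s"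
  shows "real (card (strip_row u w s a))
    = 2 * s / w + 1 - frac (s / w + of_int a * - (u / w)) - frac (s / w + of_int a * (u / w))"
proof -
  define lo where "lo = (- s - of_int a * u) / w"
  define hi where "hi = (s - of_int a * u) / w"
  have hi: "hi = lo + 2 * s / w" and hi': "hi = s / w + of_int a * - (u / w)"
    and lo: "- lo = s / w + of_int a * (u / w)"
    using w by (simp_all add: lo_def hi_def field_simps)
  have "0 < 2 * s / w" using w s by simp
  then have "of_int (\<lceil>lo\<rceil> - 1) \<le> hi" using ceiling_correct[of lo] hi by simp
  then have "\<lceil>lo\<rceil> - 1 \<le> \<lfloor>hi\<rfloor>" by (simp only: le_floor_iff)
  then have "real (card (strip_row u w s a)) = of_int \<lfloor>hi\<rfloor> - of_int \<lceil>lo\<rceil> + 1"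
    using w by (simp add: strip_row_eq_interval lo_def hi_def)
  also have "\<dots> = hi - frac hi - (lo + frac (- lo)) + 1"
    by (simp add: frac_def ceiling_def)
  finally show ?thesis using hi lo hi' by simp
qed

lemma card_strip_row_bounds:
  assumes "0 < w" and "0 < s"
  shows "of_int \<lfloor>2 * s / w\<rfloor> \<le> real (card (strip_row u w s a))"
    and "real (card (strip_row u w s a)) \<le> 2 * s / w + 1"
proof -
  define x y where "x = s / w + of_int a * - (u / w)" and "y = s / w + of_int a * (u / w)"
  have card: "real (card (strip_row u w s a)) = 2 * s / w + 1 - frac x - frac y"
    using card_strip_row[OF assms] by (simp add: x_def y_def)
  then show "real (card (strip_row u w s a)) \<le> 2 * s / w + 1"
    using frac_ge_0[of x] frac_ge_0[of y] by linarith
  have "of_int \<lfloor>2 * s / w\<rfloor> < real (card (strip_row u w s a)) + 1"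
    using card frac_lt_1[of x] frac_lt_1[of y] of_int_floor_le[of "2 * s / w"] by linarith
  then have "\<lfloor>2 * s / w\<rfloor> < int (card (strip_row u w s a)) + 1"
    by (metis of_int_less_iff of_int_of_nat_eq of_int_1 of_int_add)
  then show "of_int \<lfloor>2 * s / w\<rfloor> \<le> real (card (strip_row u w s a))" by linarith
qed

lemma strip_row_mean_tendsto:
  assumes "0 < w" and "0 < s"
  obtains \<mu> where "(\<lambda>m. (\<Sum>a<m. real (card (strip_row u w s (int a)))) / real m) \<longlonglongrightarrow> \<mu>"
    and "of_int \<lfloor>2 * s / w\<rfloor> \<le> \<mu>" and "\<mu> \<le> 2 * s / w + 1"
proof -
  define c where "c a = real (card (strip_row u w s (int a)))" for a
  define F1 F2 where "F1 = frac_sum (- (u / w)) (s / w)" and "F2 = frac_sum (u / w) (s / w)"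
  obtain L1 L2 where L1: "(\<lambda>m. F1 m / real m) \<longlonglongrightarrow> L1" and L2: "(\<lambda>m. F2 m / real m) \<longlonglongrightarrow> L2"
    using frac_sum_mean_convergent unfolding F1_def F2_def convergent_def by blast
  define \<mu> where "\<mu> = (2 * s / w + 1) - L1 - L2"
  have sum: "(\<Sum>a<m. c a) = real m * (2 * s / w + 1) - F1 m - F2 m" for m
    using card_strip_row[OF assms]
    by (simp add: c_def F1_def F2_def frac_sum_def sum_subtractf)
  have "(\<lambda>m. (2 * s / w + 1) - F1 m / real m - F2 m / real m) \<longlonglongrightarrow> \<mu>"
    unfolding \<mu>_def by (intro tendsto_intros L1 L2)
  moreover have "\<forall>\<^sub>F m in sequentially.
      (2 * s / w + 1) - F1 m / real m - F2 m / real m = (\<Sum>a<m. c a) / real m"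
    using eventually_gt_at_top[of "0::nat"] by eventually_elim (simp add: sum field_simps)
  ultimately have lim: "(\<lambda>m. (\<Sum>a<m. c a) / real m) \<longlonglongrightarrow> \<mu>"
    by (rule Lim_transform_eventually)
  have "\<forall>\<^sub>F m in sequentially. of_int \<lfloor>2 * s / w\<rfloor> \<le> (\<Sum>a<m. c a) / real m
      \<and> (\<Sum>a<m. c a) / real m \<le> 2 * s / w + 1"
    using eventually_gt_at_top[of "0::nat"]
  proof eventually_elim
    case (elim m)
    have "real m * of_int \<lfloor>2 * s / w\<rfloor> \<le> (\<Sum>a<m. c a)" "(\<Sum>a<m. c a) \<le> real m * (2 * s / w + 1)"
      using sum_mono[of "{..<m}" "\<lambda>_. of_int \<lfloor>2 * s / w\<rfloor>" c]
        sum_mono[of "{..<m}" c "\<lambda>_. 2 * s / w + 1"] card_strip_row_bounds[OF assms]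
      by (auto simp: c_def)
    then show ?case using elim by (simp add: field_simps)
  qed
  then have "of_int \<lfloor>2 * s / w\<rfloor> \<le> \<mu>" "\<mu> \<le> 2 * s / w + 1"
    by (auto intro: tendsto_lowerbound[OF lim] tendsto_upperbound[OF lim] elim: eventually_mono)
  with lim show ?thesis using that unfolding c_def by blast
qed

section \<open>Sums over growing windows\<close>

lemma sum_int_atLeastAtMost_split:
  fixes c :: "int \<Rightarrow> real"
  assumes "l \<le> n" and "0 \<le> n"
  shows "(\<Sum>a\<in>{l..n}. c a) = (\<Sum>a\<in>{0..n}. c a) + ((\<Sum>a\<in>{l..<0}. c a) - (\<Sum>a\<in>{0..<l}. c a))"
proof (cases "l \<le> 0")
  case True
  then have "{l..n} = {l..<0} \<union> {0..n}" using assms by auto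
  then show ?thesis using True by (simp add: sum.union_disjoint ivl_disj_int)
next
  case False
  then have "{0..n} = {0..<l} \<union> {l..n}" using assms by auto
  then show ?thesis using False by (simp add: sum.union_disjoint ivl_disj_int)
qed

lemma sum_int_atLeast0_atMost:
  "0 \<le> n \<Longrightarrow> (\<Sum>a\<in>{0..n}. c a) = (\<Sum>a<nat n + 1. c (int a))"
  using sum.atLeast_int_atMost_int_shift[of c 0 "nat n"]
  by (simp add: lessThan_Suc_atMost atLeast0AtMost o_def)

lemma floor_mean_tendsto:
  fixes c :: "nat \<Rightarrow> real"
  assumes "(\<lambda>m. (\<Sum>a<m. c a) / real m) \<longlonglongrightarrow> \<mu>"
  shows "((\<lambda>Y. (\<Sum>a<nat \<lfloor>Y\<rfloor> + 1. c a) / Y) \<longlongrightarrow> \<mu>) at_top"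
proof -
  have "filterlim (\<lambda>Y::real. nat \<lfloor>Y\<rfloor> + 1) sequentially at_top"
    unfolding filterlim_at_top eventually_at_top_linorder
    by (metis le_SucI le_nat_floor Suc_eq_plus1)
  from filterlim_compose[OF assms this]
  have "((\<lambda>Y. (\<Sum>a<nat \<lfloor>Y\<rfloor> + 1. c a) / real (nat \<lfloor>Y\<rfloor> + 1) * (real (nat \<lfloor>Y\<rfloor> + 1) / Y))
      \<longlongrightarrow> \<mu> * 1) at_top"
    by (intro tendsto_mult) (simp_all add: o_def, real_asymp)
  then show ?thesis by simp
qed

lemma window_sum_mean_tendsto:
  fixes c :: "int \<Rightarrow> real"
  assumes mean: "(\<lambda>m. (\<Sum>a<m. c (int a)) / real m) \<longlonglongrightarrow> \<mu>" and K: "0 < K"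
  shows "((\<lambda>T. (\<Sum>a\<in>{\<lceil>l\<rceil>..\<lfloor>K * T + b\<rfloor>}. c a) / T) \<longlongrightarrow> K * \<mu>) at_top"
proof -
  define h where "h Y = (\<Sum>a<nat \<lfloor>Y\<rfloor> + 1. c (int a))" for Y :: real
  define C where "C = (\<Sum>a\<in>{\<lceil>l\<rceil>..<0}. c a) - (\<Sum>a\<in>{0..<\<lceil>l\<rceil>}. c a)"
  have "filterlim (\<lambda>T. K * T + b) at_top at_top" using K by real_asymp
  from filterlim_compose[OF floor_mean_tendsto[OF mean] this]
  have "((\<lambda>T. h (K * T + b) / (K * T + b) * ((K * T + b) / T) + C / T) \<longlongrightarrow> \<mu> * K + 0) at_top"
    unfolding h_def using K by (intro tendsto_intros) (simp_all add: o_def, real_asymp+)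
  moreover have "\<forall>\<^sub>F T in at_top. of_int (max \<lceil>l\<rceil> 0) + 1 \<le> K * T + b" using K by real_asymp
  then have "\<forall>\<^sub>F T in at_top. h (K * T + b) / (K * T + b) * ((K * T + b) / T) + C / T
      = (\<Sum>a\<in>{\<lceil>l\<rceil>..\<lfloor>K * T + b\<rfloor>}. c a) / T"
    using eventually_gt_at_top[of 0]
  proof eventually_elim
    case (elim T)
    then have "\<lceil>l\<rceil> \<le> \<lfloor>K * T + b\<rfloor>" "0 \<le> \<lfloor>K * T + b\<rfloor>" by linarith+
    then have "(\<Sum>a\<in>{\<lceil>l\<rceil>..\<lfloor>K * T + b\<rfloor>}. c a) = h (K * T + b) + C"
      unfolding sum_int_atLeastAtMost_split[OF \<open>\<lceil>l\<rceil> \<le> _\<close> \<open>0 \<le> _\<close>]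
        sum_int_atLeast0_atMost[OF \<open>0 \<le> _\<close>] by (simp add: h_def C_def)
    moreover have "0 < K * T + b" using elim by linarith
    then have "h (K * T + b) / (K * T + b) * ((K * T + b) / T) = h (K * T + b) / T" by simp
    ultimately show ?case by (simp add: add_divide_distrib)
  qed
  ultimately show ?thesis by (simp add: tendsto_cong mult.commute)
qed

section \<open>Counting the robots\<close>

definition hex_point :: "real \<Rightarrow> real \<Rightarrow> int \<times> int \<Rightarrow> real \<times> real" where
  "hex_point d \<theta> ab =
     (of_int (fst ab) * d * cos \<theta> + of_int (snd ab) * d * cos (\<theta> + pi/3),
      of_int (fst ab) * d * sin \<theta> + of_int (snd ab) * d * sin (\<theta> + pi/3))"

lemma hex_lattice_eq_range: "hex_lattice d \<theta> = range (hex_point d \<theta>)"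
  unfolding hex_lattice_def hex_point_def by (auto simp: image_iff) (metis fst_conv snd_conv)

lemma sin_cos_cross_pi_third: "sin (\<theta> + pi/3) * cos \<theta> - cos (\<theta> + pi/3) * sin \<theta> = sqrt 3 / 2"
  using sin_diff[of "\<theta> + pi/3" \<theta>] by (simp add: sin_60)

lemma hex_point_coord_fst:
  "fst (hex_point d \<theta> ab) * (d * sin (\<theta> + pi/3)) - snd (hex_point d \<theta> ab) * (d * cos (\<theta> + pi/3))
     = of_int (fst ab) * (sqrt 3 / 2 * d\<^sup>2)"
proof -
  have "fst (hex_point d \<theta> ab) * (d * sin (\<theta> + pi/3)) - snd (hex_point d \<theta> ab) * (d * cos (\<theta> + pi/3))
      = of_int (fst ab) * d\<^sup>2 * (sin (\<theta> + pi/3) * cos \<theta> - cos (\<theta> + pi/3) * sin \<theta>)"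
    by (simp add: hex_point_def power2_eq_square algebra_simps)
  then show ?thesis by (simp add: sin_cos_cross_pi_third)
qed

lemma hex_point_coord_snd:
  "snd (hex_point d \<theta> ab) * (d * cos \<theta>) - fst (hex_point d \<theta> ab) * (d * sin \<theta>)
     = of_int (snd ab) * (sqrt 3 / 2 * d\<^sup>2)"
proof -
  have "snd (hex_point d \<theta> ab) * (d * cos \<theta>) - fst (hex_point d \<theta> ab) * (d * sin \<theta>)
      = of_int (snd ab) * d\<^sup>2 * (sin (\<theta> + pi/3) * cos \<theta> - cos (\<theta> + pi/3) * sin \<theta>)"
    by (simp add: hex_point_def power2_eq_square algebra_simps)
  then show ?thesis by (simp add: sin_cos_cross_pi_third)
qed

lemma inj_hex_point:
  assumes "d \<noteq> 0"
  shows "inj (hex_point d \<theta>)"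
proof (rule injI)
  fix ab ab' assume "hex_point d \<theta> ab = hex_point d \<theta> ab'"
  then have "of_int (fst ab) * (sqrt 3 / 2 * d\<^sup>2) = of_int (fst ab') * (sqrt 3 / 2 * d\<^sup>2)"
    and "of_int (snd ab) * (sqrt 3 / 2 * d\<^sup>2) = of_int (snd ab') * (sqrt 3 / 2 * d\<^sup>2)"
    by (metis hex_point_coord_fst, metis hex_point_coord_snd)
  then show "ab = ab'" using assms by (simp add: prod_eq_iff)
qed

lemma reached_imp_strip:
  assumes "reached v s T (x, y)" and "0 \<le> s" and "0 \<le> v"
  shows "\<bar>y\<bar> \<le> s" and "x \<le> v * T"
proof -
  obtain t where t: "0 \<le> t" "t \<le> T" and "norm (s + x - v * t, y) \<le> s"
    using assms(1) by (auto simp: reached_def)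
  then have "(s + x - v * t)\<^sup>2 + y\<^sup>2 \<le> s\<^sup>2"
    by (intro sqrt_le_D) (simp add: norm_Pair)
  then have "\<bar>y\<bar> \<le> \<bar>s\<bar>" "\<bar>s + x - v * t\<bar> \<le> \<bar>s\<bar>"
    by (simp_all only: abs_le_square_iff) (auto intro: order_trans[rotated])
  moreover have "v * t \<le> v * T" using t assms(3) by (simp add: mult_left_mono)
  ultimately show "\<bar>y\<bar> \<le> s" and "x \<le> v * T" using assms(2) by linarith+
qed
lemma reached_if_strip:
  assumes "0 \<le> x" "x \<le> v * T - s" "\<bar>y\<bar> \<le> s" "0 < v"
  shows "reached v s T (x, y)"
  unfolding reached_def
proof (intro bexI)
  show "norm (s + fst (x, y) - v * ((s + x) / v), snd (x, y)) \<le> s" using assms by (simp add: norm_Pair)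
  show "(s + x) / v \<in> {0..T}"
    using assms by (auto simp: pos_divide_le_eq mult.commute)
qed

locale hex_robots =
  fixes v d s \<theta> :: real
  assumes v_pos: "0 < v" and d_pos: "0 < d" and s_pos: "0 < s"
    and sin_tilt_pos: "0 < sin (\<theta> + pi/3)"
begin

text \<open>
  A point of the strip lies in row \<open>a = (x w\<^sub>y - y w\<^sub>x) / cell_area\<close>, which differs from
  \<open>x w\<^sub>y / cell_area\<close> by at most \<open>overhang\<close>; the rows meeting \<open>0 \<le> x \<le> vT\<close> thus number
  \<open>rate * T\<close> up to a bounded error.
\<close>

definition uy :: real where "uy = d * sin \<theta>"
definition wx :: real where "wx = d * cos (\<theta> + pi/3)"
definition wy :: real where "wy = d * sin (\<theta> + pi/3)"
definition cell_area :: real where "cell_area = sqrt 3 / 2 * d\<^sup>2"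
definition overhang :: real where "overhang = s * \<bar>wx\<bar> / cell_area"
definition rate :: real where "rate = v * wy / cell_area"

definition reached_pairs :: "real \<Rightarrow> (int \<times> int) set" where
  "reached_pairs T = {ab. 0 \<le> fst (hex_point d \<theta> ab) \<and> reached v s T (hex_point d \<theta> ab)}"

lemma wy_pos: "0 < wy"
  using d_pos sin_tilt_pos by (simp add: wy_def)

lemma cell_area_pos: "0 < cell_area"
  using d_pos by (simp add: cell_area_def)

lemma rate_pos: "0 < rate"
  using v_pos wy_pos cell_area_pos by (simp add: rate_def)

lemma row_index_eq:
  "of_int (fst ab) * cell_area = fst (hex_point d \<theta> ab) * wy - snd (hex_point d \<theta> ab) * wx"
  using hex_point_coord_fst[of d \<theta> ab] by (simp add: cell_area_def wx_def wy_def)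

lemma mem_strip_row_iff: "snd ab \<in> strip_row uy wy s (fst ab) \<longleftrightarrow> \<bar>snd (hex_point d \<theta> ab)\<bar> \<le> s"
  by (simp add: strip_row_def hex_point_def uy_def wy_def algebra_simps)

lemma abs_mult_wx_le: "\<bar>y\<bar> \<le> s \<Longrightarrow> \<bar>y * wx\<bar> \<le> s * \<bar>wx\<bar>"
  by (simp add: abs_mult mult_right_mono)

lemma N_reached_eq_card: "N_reached v d s \<theta> T = card (reached_pairs T)"
proof -
  have "{q \<in> hex_lattice d \<theta>. 0 \<le> fst q \<and> reached v s T q} = hex_point d \<theta> ` reached_pairs T"
    by (auto simp: hex_lattice_eq_range reached_pairs_def)
  then show ?thesis
    using inj_hex_point[of d \<theta>] d_pos
    by (simp add: N_reached_def card_image inj_on_subset)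
qed

lemma reached_pairs_subset:
  "reached_pairs T \<subseteq> (SIGMA a:{\<lceil>- overhang\<rceil>..\<lfloor>rate * T + overhang\<rfloor>}. strip_row uy wy s a)"
proof safe
  fix a b assume "(a, b) \<in> reached_pairs T"
  then obtain x y where p: "hex_point d \<theta> (a, b) = (x, y)" and "0 \<le> x" and r: "reached v s T (x, y)"
    by (metis (mono_tags, lifting) mem_Collect_eq prod.collapse reached_pairs_def)
  have y: "\<bar>y\<bar> \<le> s" and "x \<le> v * T"
    using reached_imp_strip[OF r] s_pos v_pos by auto
  then show "b \<in> strip_row uy wy s a" using mem_strip_row_iff[of "(a, b)"] p by simp
  have "0 \<le> x * wy" "x * wy \<le> v * T * wy"
    using \<open>0 \<le> x\<close> \<open>x \<le> v * T\<close> wy_pos by (simp_all add: mult_right_mono)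
  then have "- (s * \<bar>wx\<bar>) \<le> of_int a * cell_area" "of_int a * cell_area \<le> v * T * wy + s * \<bar>wx\<bar>"
    using row_index_eq[of "(a, b)"] abs_mult_wx_le[OF y] p by (simp_all add: abs_le_iff)
  then have "- overhang \<le> of_int a" "of_int a \<le> rate * T + overhang"
    using cell_area_pos
    by (simp_all add: overhang_def rate_def field_simps)
  then show "a \<in> {\<lceil>- overhang\<rceil>..\<lfloor>rate * T + overhang\<rfloor>}"
    by (simp add: ceiling_le_iff le_floor_iff)
qed

lemma reached_pairs_supset:
  "(SIGMA a:{\<lceil>overhang\<rceil>..\<lfloor>rate * T + - (s * wy / cell_area + overhang)\<rfloor>}. strip_row uy wy s a)
     \<subseteq> reached_pairs T"
proof safe
  fix a b
  assume a: "a \<in> {\<lceil>overhang\<rceil>..\<lfloor>rate * T + - (s * wy / cell_area + overhang)\<rfloor>}"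
    and b: "b \<in> strip_row uy wy s a"
  obtain x y where p: "hex_point d \<theta> (a, b) = (x, y)" by fastforce
  have y: "\<bar>y\<bar> \<le> s" using mem_strip_row_iff[of "(a, b)"] p b by simp
  from a have "overhang \<le> of_int a" "of_int a \<le> rate * T - (s * wy / cell_area + overhang)"
    by (simp_all add: ceiling_le_iff le_floor_iff)
  then have "s * \<bar>wx\<bar> \<le> of_int a * cell_area" "of_int a * cell_area \<le> (v * T - s) * wy - s * \<bar>wx\<bar>"
    using cell_area_pos by (simp_all add: overhang_def rate_def field_simps)
  then have "0 \<le> x * wy" "x * wy \<le> (v * T - s) * wy"
    using row_index_eq[of "(a, b)"] abs_mult_wx_le[OF y] p by (simp_all add: abs_le_iff)
  then have "0 \<le> x" "x \<le> v * T - s" using wy_pos by (simp_all add: zero_le_mult_iff)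
  then show "(a, b) \<in> reached_pairs T"
    using reached_if_strip[OF _ _ y v_pos] p by (simp add: reached_pairs_def)
qed

lemma card_SIGMA_strip_row:
  "real (card (SIGMA a:{lo..hi}. strip_row uy wy s a)) = (\<Sum>a\<in>{lo..hi}. real (card (strip_row uy wy s a)))"
  using wy_pos by (simp add: card_SigmaI finite_strip_row)

lemma N_reached_tendsto:
  assumes mean: "(\<lambda>m. (\<Sum>a<m. real (card (strip_row uy wy s (int a)))) / real m) \<longlonglongrightarrow> \<mu>"
  shows "((\<lambda>T. real (N_reached v d s \<theta> T) / T) \<longlongrightarrow> rate * \<mu>) at_top"
proof -
  define lower upper where
    "lower T = (SIGMA a:{\<lceil>overhang\<rceil>..\<lfloor>rate * T + - (s * wy / cell_area + overhang)\<rfloor>}. strip_row uy wy s a)"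
    and "upper T = (SIGMA a:{\<lceil>- overhang\<rceil>..\<lfloor>rate * T + overhang\<rfloor>}. strip_row uy wy s a)" for T
  have bounds: "real (card (lower T)) \<le> real (N_reached v d s \<theta> T)"
    "real (N_reached v d s \<theta> T) \<le> real (card (upper T))" for T
  proof -
    have fin: "finite (upper T)" using wy_pos by (simp add: upper_def finite_strip_row)
    have sub: "lower T \<subseteq> reached_pairs T" "reached_pairs T \<subseteq> upper T"
      unfolding lower_def upper_def by (rule reached_pairs_supset, rule reached_pairs_subset)
    show "real (card (lower T)) \<le> real (N_reached v d s \<theta> T)"
      "real (N_reached v d s \<theta> T) \<le> real (card (upper T))"
      unfolding N_reached_eq_card of_nat_le_iff
      by (rule card_mono[OF finite_subset[OF sub(2) fin] sub(1)], rule card_mono[OF fin sub(2)])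
  qed
  have "\<forall>\<^sub>F T in at_top. real (card (lower T)) / T \<le> real (N_reached v d s \<theta> T) / T"
    using eventually_gt_at_top[of "0::real"]
    by eventually_elim (intro divide_right_mono bounds, simp)
  moreover have "\<forall>\<^sub>F T in at_top. real (N_reached v d s \<theta> T) / T \<le> real (card (upper T)) / T"
    using eventually_gt_at_top[of "0::real"]
    by eventually_elim (intro divide_right_mono bounds, simp)
  moreover have "((\<lambda>T. real (card (lower T)) / T) \<longlongrightarrow> rate * \<mu>) at_top"
    "((\<lambda>T. real (card (upper T)) / T) \<longlongrightarrow> rate * \<mu>) at_top"
    unfolding lower_def upper_def card_SIGMA_strip_row
    using window_sum_mean_tendsto[OF mean rate_pos] by auto
  ultimately show ?thesis by (rule real_tendsto_sandwich)
qed

lemma f_h_tendsto: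
  assumes "(\<lambda>m. (\<Sum>a<m. real (card (strip_row uy wy s (int a)))) / real m) \<longlonglongrightarrow> \<mu>"
  shows "((\<lambda>T. f_h v d s T \<theta>) \<longlongrightarrow> rate * \<mu>) at_top"
proof -
  have "((\<lambda>T. real (N_reached v d s \<theta> T) / T - 1 / T) \<longlongrightarrow> rate * \<mu> - 0) at_top"
    by (intro tendsto_diff N_reached_tendsto[OF assms]) real_asymp
  then show ?thesis by (simp add: f_h_def diff_divide_distrib)
qed

lemma rate_eq: "rate = 2 * v * cos (\<theta> - pi/6) / (sqrt 3 * d)"
proof -
  have "sin (\<theta> + pi/3) = cos (\<theta> - pi/6)"
    using sin_cos_eq[of "\<theta> + pi/3"] cos_minus[of "\<theta> - pi/6"] by (simp add: algebra_simps)
  then have "rate = v * (d * cos (\<theta> - pi/6)) / (sqrt 3 / 2 * d\<^sup>2)"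
    by (simp add: rate_def wy_def cell_area_def)
  also have "\<dots> = 2 * v * cos (\<theta> - pi/6) / (sqrt 3 * d)"
    using d_pos by (simp add: power2_eq_square)
  finally show ?thesis .
qed

lemma rate_mult_row_width: "rate * (2 * s / wy) = 4 * v * s / (sqrt 3 * d\<^sup>2)"
  using wy_pos by (simp add: rate_def cell_area_def)

end

theorem proposition6:
  fixes v d s \<theta> :: real
  assumes "v > 0" and "d > 0" and "s \<ge> d / 2"
    and "0 \<le> \<theta>" and "\<theta> < pi / 3"
  shows "\<exists>L. ((\<lambda>T. f_h v d s T \<theta>) \<longlongrightarrow> L) at_top \<and>
     L \<in> {4 * v * s / (sqrt 3 * d^2) - 2 * v * cos (\<theta> - pi/6) / (sqrt 3 * d) <..
          4 * v * s / (sqrt 3 * d^2) + 2 * v * cos (\<theta> - pi/6) / (sqrt 3 * d)}"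
proof -
  interpret hex_robots v d s \<theta>
  proof
    show "0 < sin (\<theta> + pi/3)" using assms by (intro sin_gt_zero) auto
  qed (use assms in auto)
  obtain \<mu> where mean: "(\<lambda>m. (\<Sum>a<m. real (card (strip_row uy wy s (int a)))) / real m) \<longlonglongrightarrow> \<mu>"
    and lo: "of_int \<lfloor>2 * s / wy\<rfloor> \<le> \<mu>" and hi: "\<mu> \<le> 2 * s / wy + 1"
    using strip_row_mean_tendsto[OF wy_pos s_pos] .
  have "2 * s / wy - 1 < \<mu>" using lo floor_correct[of "2 * s / wy"] by linarith
  then have "rate * (2 * s / wy - 1) < rate * \<mu>" "rate * \<mu> \<le> rate * (2 * s / wy + 1)"
    using hi rate_pos by (intro mult_strict_left_mono mult_left_mono; simp)+
  then have "rate * (2 * s / wy) - rate < rate * \<mu>" "rate * \<mu> \<le> rate * (2 * s / wy) + rate"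
    by (simp_all add: right_diff_distrib distrib_left)
  then show ?thesis
    using f_h_tendsto[OF mean] unfolding rate_mult_row_width[symmetric] rate_eq[symmetric] by auto
qed

end
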